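(* Let $n$ be a positive integer and $\Theta=\left[-\frac{1}{\sqrt n},+\frac{1}{\sqrt n}\right]^n$. Consider any (possibly randomized) learner that, for $t=1,\dots,T$, outputs $\hat c_t\in\Theta$ depending only on past observations $\{(X_i,x_i)\}_{i=1}^{t-1}$ (and its internal randomness). For any $T\ge n$ and $B>0$, there exist $c^*\in\Theta$ and non-empty compact sets $X_1,\dots,X_T\subseteq\mathbb{R}^n$ such that $$\max_{t=1,\dots,T}\max\{\langle c-c',x-x'\rangle: c,c'\in\Theta,\ x,x'\in X_t\}=B\quad\text{and}\quad\mathbb{E}\left[R^{c^*}_T\right]\ge\frac{Bn}{4},$$ where $R^{c^*}_T=\sum_{t=1}^T\langle c^*,x_t-\hat x_t\rangle$, $x_t\in\arg\max_{x\in X_t}\langle c^*,x\rangle$, $\hat x_t\in\arg\max_{x\in X_t}\langle\hat c_t,x\rangle$, and the expectation is over the learner's randomness. *)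

theory Defs
  imports "HOL-Probability.Probability"
begin

definition Theta :: "(real^'n::finite) set" where
  "Theta = {c. \<forall>i. \<bar>c $ i\<bar> \<le> 1 / sqrt (real CARD('n))}"

definition hist :: "(nat \<Rightarrow> 'a set) \<Rightarrow> (nat \<Rightarrow> 'a) \<Rightarrow> nat \<Rightarrow> ('a set \<times> 'a) list" where
  "hist X x t = map (\<lambda>i. (X i, x i)) [1..<t]"

text \<open>A tie-breaking rule: sel X c is a maximiser of the linear objective c over X
  (for non-empty compact X).\<close>
definition argmax_selector :: "('a::real_inner set \<Rightarrow> 'a \<Rightarrow> 'a) \<Rightarrow> bool" where
  "argmax_selector sel \<longleftrightarrow>
     (\<forall>X c. compact X \<and> X \<noteq> {} \<longrightarrow> sel X c \<in> X \<and> (\<forall>y\<in>X. c \<bullet> y \<le> c \<bullet> sel X c))"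

definition width :: "nat \<Rightarrow> (nat \<Rightarrow> (real^'n::finite) set) \<Rightarrow> real" where
  "width T X = (MAX t\<in>{1..T}. Sup {(c - c') \<bullet> (x - x') | c c' x x'.
        c \<in> Theta \<and> c' \<in> Theta \<and> x \<in> X t \<and> x' \<in> X t})"

definition regret ::
  "(nat \<Rightarrow> ((real^'n::finite) set \<times> (real^'n)) list \<Rightarrow> real^'n)
   \<Rightarrow> ((real^'n) set \<Rightarrow> real^'n \<Rightarrow> real^'n) \<Rightarrow> nat \<Rightarrow> real^'n \<Rightarrow> (nat \<Rightarrow> (real^'n) set) \<Rightarrow> real" where
  "regret L sel T cs X =
     (\<Sum>t=1..T. cs \<bullet> (sel (X t) cs - sel (X t) (L t (hist X (\<lambda>i. sel (X i) cs) t))))"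

end

theory Submission
  imports Defs
begin

text \<open>Order the coordinates as e 1, ..., e n. In round t \<le> n the sets are X t = {a e_t, -a e_t}
  with a = B sqrt n / 4, later ones are {0}, and each round has width 4 a / sqrt n = B.
  The comparator c* has entries \<plusminus>1/sqrt n, whose signs are fixed one coordinate at a time:
  the expected regret of round t depends only on the signs of coordinates e 1, ..., e t, and
  flipping the sign of e t swaps the optimal point of round t without changing the learner's
  history. Hence the two choices have expected regrets summing to 2 a / sqrt n = B/2, and the
  better one contributes at least B/4 in each of the n rounds.\<close>

definition sign_vector :: "real \<Rightarrow> ('n \<Rightarrow> bool) \<Rightarrow> real^'n" where
  "sign_vector r s = (\<chi> j. if s j then r else - r)"

lemma sign_vector_nth [simp]: "sign_vector r s $ j = (if s j then r else - r)"
  by (simp add: sign_vector_def)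

lemma sign_vector_in_Theta:
  "sign_vector (1 / sqrt (real CARD('n))) s \<in> (Theta :: (real^'n::finite) set)"
  by (simp add: Theta_def)

lemma Theta_nth_abs_le: "c \<in> Theta \<Longrightarrow> \<bar>c $ k\<bar> \<le> 1 / sqrt (real CARD('n))"
  for c :: "real^'n::finite"
  by (simp add: Theta_def)

lemma argmax_selectorD:
  assumes "argmax_selector sel" "compact X" "X \<noteq> {}"
  shows argmax_selector_mem: "sel X c \<in> X"
    and argmax_selector_max: "y \<in> X \<Longrightarrow> c \<bullet> y \<le> c \<bullet> sel X c"
  using assms unfolding argmax_selector_def by blast+

lemma argmax_selector_singleton: "argmax_selector sel \<Longrightarrow> sel {x} c = x"
  using argmax_selector_mem[of sel "{x}"] by simp

lemma argmax_selector_axis_pair: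
  fixes c :: "real^'n::finite"
  assumes sel: "argmax_selector sel" and "0 < a" and "c $ k \<noteq> 0"
  shows "sel {axis k a, axis k (- a)} c = axis k (if 0 < c $ k then a else - a)"
proof -
  let ?P = "{axis k a, axis k (- a)}"
  have P: "compact ?P" "?P \<noteq> {}" by (simp_all add: finite_imp_compact)
  have "c \<bullet> axis k a \<le> c \<bullet> sel ?P c" "c \<bullet> axis k (- a) \<le> c \<bullet> sel ?P c"
    by (simp_all add: argmax_selector_max[OF sel P])
  with argmax_selector_mem[OF sel P, of c] assms(2,3) show ?thesis
    by (auto simp: inner_axis zero_le_mult_iff mult_le_0_iff)
qed

lemma sel_axis_pair_sign_vector:
  assumes "argmax_selector sel" "0 < a" "0 < r"
  shows "sel {axis k a, axis k (- a)} (sign_vector r s) = axis k (if s k then a else - a)"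
  using argmax_selector_axis_pair[OF assms(1,2), of "sign_vector r s" k] assms(3) by simp

lemma sign_vector_regret_axis_pair:
  assumes "argmax_selector sel" "0 < a" "0 < r" "y \<in> {axis k a, axis k (- a)}"
  shows "sign_vector r s \<bullet> (sel {axis k a, axis k (- a)} (sign_vector r s) - y)
    = (if y = axis k (if s k then a else - a) then 0 else 2 * a * r)"
  using assms(2-4) by (auto simp: sel_axis_pair_sign_vector[OF assms(1-3)] inner_diff_right
      inner_axis axis_eq_axis)

definition round_width :: "(real^'n::finite) set \<Rightarrow> real" where
  "round_width X = Sup {(c - c') \<bullet> (x - x') | c c' x x'. c \<in> Theta \<and> c' \<in> Theta \<and> x \<in> X \<and> x' \<in> X}"

lemma width_eq_Max_round_width: "width T X = (MAX t\<in>{1..T}. round_width (X t))"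
  by (simp add: width_def round_width_def)

lemma round_width_singleton: "round_width {x} = 0"
proof -
  have "{(c - c') \<bullet> (y - y') | c c' y y'. c \<in> Theta \<and> c' \<in> Theta \<and> y \<in> {x} \<and> y' \<in> {x}} = {0}"
    using sign_vector_in_Theta by fastforce
  then show ?thesis by (simp add: round_width_def)
qed

lemma round_width_axis_pair:
  fixes k :: "'n::finite"
  assumes "0 \<le> a"
  shows "round_width {axis k a, axis k (- a)} = 4 * a / sqrt (real CARD('n))"
proof -
  define r where "r = 1 / sqrt (real CARD('n))"
  have "0 < r" by (simp add: r_def)
  let ?P = "{axis k a, axis k (- a)} :: (real^'n) set"
  let ?S = "{(c - c') \<bullet> (x - x') | c c' x x'. c \<in> Theta \<and> c' \<in> Theta \<and> x \<in> ?P \<and> x' \<in> ?P}"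
  have pair_inner: "(c - c') \<bullet> (axis k b - axis k b') = (c $ k - c' $ k) * (b - b')"
    for c c' :: "real^'n" and b b'
    by (simp add: inner_diff_left inner_diff_right inner_axis algebra_simps)
  have "4 * a * r
      = (sign_vector r (\<lambda>_. True) - sign_vector r (\<lambda>_. False)) \<bullet> (axis k a - axis k (- a))"
    by (simp add: pair_inner)
  moreover have "sign_vector r s \<in> (Theta :: (real^'n) set)" for s
    unfolding r_def by (rule sign_vector_in_Theta)
  ultimately have max_in: "4 * a * r \<in> ?S"
    by blast
  have "z \<le> 4 * a * r" if "z \<in> ?S" for z
  proof -
    obtain c c' b b' where z: "z = (c - c') \<bullet> (axis k b - axis k b')"
      and c: "c \<in> Theta" "c' \<in> Theta" and b: "\<bar>b\<bar> \<le> a" "\<bar>b'\<bar> \<le> a"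
      using \<open>z \<in> ?S\<close> assms by fastforce
    have "z \<le> \<bar>c $ k - c' $ k\<bar> * \<bar>b - b'\<bar>"
      by (simp add: z pair_inner abs_mult[symmetric])
    also have "\<dots> \<le> (2 * r) * (2 * a)"
      using Theta_nth_abs_le[OF c(1), of k] Theta_nth_abs_le[OF c(2), of k] b
      by (intro mult_mono) (auto simp: r_def)
    finally show ?thesis by (simp add: algebra_simps)
  qed
  with max_in have "round_width ?P = 4 * a * r"
    unfolding round_width_def by (intro cSup_eq_maximum)
  then show ?thesis by (simp add: r_def)
qed

definition axis_instance :: "(nat \<Rightarrow> 'n) \<Rightarrow> nat \<Rightarrow> real \<Rightarrow> nat \<Rightarrow> (real^'n::finite) set" where
  "axis_instance e n a t = (if t \<in> {1..n} then {axis (e t) a, axis (e t) (- a)} else {0})"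

lemma axis_instance_compact: "compact (axis_instance e n a t)"
  and axis_instance_nonempty: "axis_instance e n a t \<noteq> {}"
  by (simp_all add: axis_instance_def finite_imp_compact)

lemma width_axis_instance:
  fixes e :: "nat \<Rightarrow> 'n::finite"
  assumes "1 \<le> n" "n \<le> T" "0 \<le> a"
  shows "width T (axis_instance e n a) = 4 * a / sqrt (real CARD('n))"
proof -
  have "round_width (axis_instance e n a t)
      = (if t \<in> {1..n} then 4 * a / sqrt (real CARD('n)) else 0)" for t
    by (simp add: axis_instance_def round_width_axis_pair round_width_singleton assms(3))
  moreover have "1 \<in> {1..T}" "1 \<in> {1..n}" using assms(1,2) by auto
  ultimately show ?thesis
    unfolding width_eq_Max_round_width using assms(3)
    by (intro Max_eqI) (auto intro!: image_eqI[where x = 1])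
qed

lemma sel_axis_instance_sign_vector:
  assumes "argmax_selector sel" "0 < a" "0 < r"
  shows "sel (axis_instance e n a t) (sign_vector r s)
    = (if t \<in> {1..n} then axis (e t) (if s (e t) then a else - a) else 0)"
  by (simp add: axis_instance_def sel_axis_pair_sign_vector[OF assms] argmax_selector_singleton[OF assms(1)])

lemma hist_cong: "(\<And>i. i \<in> {1..<t} \<Longrightarrow> x i = x' i) \<Longrightarrow> hist X x t = hist X x' t"
  by (simp add: hist_def)

definition round_regret ::
  "(nat \<Rightarrow> ((real^'n::finite) set \<times> (real^'n)) list \<Rightarrow> real^'n)
   \<Rightarrow> ((real^'n) set \<Rightarrow> real^'n \<Rightarrow> real^'n) \<Rightarrow> (nat \<Rightarrow> (real^'n) set) \<Rightarrow> real^'n \<Rightarrow> nat \<Rightarrow> real"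
  where
  "round_regret L sel X cs t = cs \<bullet> (sel (X t) cs - sel (X t) (L t (hist X (\<lambda>i. sel (X i) cs) t)))"

lemma regret_eq_sum_round_regret: "regret L sel T cs X = (\<Sum>t=1..T. round_regret L sel X cs t)"
  by (simp add: regret_def round_regret_def)

lemma round_regret_axis_instance:
  fixes e :: "nat \<Rightarrow> 'n::finite" and n :: nat
  assumes sel: "argmax_selector sel" and "0 < a" "0 < r"
  defines "X \<equiv> axis_instance e n a"
  shows "round_regret L sel X (sign_vector r s) t
    = (if t \<in> {1..n} \<and> sel (X t) (L t (hist X (\<lambda>i. sel (X i) (sign_vector r s)) t))
            \<noteq> axis (e t) (if s (e t) then a else - a)
       then 2 * a * r else 0)"
proof (cases "t \<in> {1..n}")
  case True
  then have Xt: "X t = {axis (e t) a, axis (e t) (- a)}" by (simp add: X_def axis_instance_def)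
  let ?y = "sel (X t) (L t (hist X (\<lambda>i. sel (X i) (sign_vector r s)) t))"
  have "?y \<in> X t"
    unfolding X_def by (intro argmax_selector_mem[OF sel axis_instance_compact axis_instance_nonempty])
  then show ?thesis
    using True sign_vector_regret_axis_pair[OF assms(1-3)] by (simp add: round_regret_def Xt)
next
  case False
  then have "X t = {0}" unfolding X_def axis_instance_def by (rule if_not_P)
  with False show ?thesis by (auto simp: round_regret_def argmax_selector_singleton[OF sel])
qed

lemma hist_axis_instance_sign_vector_cong:
  fixes n :: nat
  assumes "argmax_selector sel" "0 < a" "0 < r" "\<And>i. i \<in> {1..<t} \<Longrightarrow> s (e i) = s' (e i)"
  defines "X \<equiv> axis_instance e n a"
  shows "hist X (\<lambda>i. sel (X i) (sign_vector r s)) t = hist X (\<lambda>i. sel (X i) (sign_vector r s')) t"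
  unfolding X_def by (rule hist_cong) (simp add: sel_axis_instance_sign_vector[OF assms(1-3)] assms(4))

lemma exists_signs_ge_half_flip_sum:
  fixes f :: "('a \<Rightarrow> bool) \<Rightarrow> nat \<Rightarrow> real" and e :: "nat \<Rightarrow> 'a"
  assumes "inj_on e {1..n}"
    and local: "\<And>s s' t. t \<in> {1..n} \<Longrightarrow> (\<And>i. i \<in> {1..t} \<Longrightarrow> s (e i) = s' (e i)) \<Longrightarrow> f s t = f s' t"
    and flip: "\<And>s t. t \<in> {1..n} \<Longrightarrow> 2 * m \<le> f (s(e t := True)) t + f (s(e t := False)) t"
  shows "\<exists>s. \<forall>t\<in>{1..n}. m \<le> f s t"
proof -
  have "\<exists>s. \<forall>t\<in>{1..k}. m \<le> f s t" if "k \<le> n" for k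
    using that
  proof (induction k)
    case 0
    then show ?case by simp
  next
    case (Suc k)
    then obtain s where s: "\<forall>t\<in>{1..k}. m \<le> f s t" by auto
    define s' where "s' b = s(e (Suc k) := b)" for b
    have new: "e (Suc k) \<noteq> e i" if "i \<in> {1..k}" for i
      using inj_onD[OF assms(1)] that Suc.prems by fastforce
    have old: "m \<le> f (s' b) t" if t: "t \<in> {1..k}" for t b
    proof -
      have "f (s' b) t = f s t"
      proof (rule local)
        fix i assume "i \<in> {1..t}"
        with new t have "e i \<noteq> e (Suc k)" by fastforce
        then show "s' b (e i) = s (e i)" by (simp add: s'_def)
      qed (use t Suc.prems in auto)
      with s t show ?thesis by simp
    qed
    have "2 * m \<le> f (s' True) (Suc k) + f (s' False) (Suc k)"
      using flip[of "Suc k" s] Suc.prems by (simp add: s'_def)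
    then have "m \<le> f (s' True) (Suc k) \<or> m \<le> f (s' False) (Suc k)" by linarith
    then obtain b where "m \<le> f (s' b) (Suc k)" by blast
    with old show ?case by (metis atLeastAtMost_iff le_Suc_eq)
  qed
  then show ?thesis by blast
qed

lemma measurable_round_regret:
  assumes "\<And>t h. (\<lambda>w. L w t h) \<in> borel_measurable M" "\<And>X. sel X \<in> borel_measurable borel"
  shows "(\<lambda>w. round_regret (L w) sel X cs t) \<in> borel_measurable M"
proof -
  have "(\<lambda>w. sel (X t) (L w t h)) \<in> borel_measurable M" for h
    using measurable_compose[OF assms] .
  then show ?thesis
    unfolding round_regret_def by measurable
qed

lemma round_regret_axis_instance_local:
  fixes n :: nat
  assumes "argmax_selector sel" "0 < a" "0 < r" "\<And>i. i \<in> {1..t} \<Longrightarrow> s (e i) = s' (e i)"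
  defines "X \<equiv> axis_instance e n a"
  shows "round_regret L sel X (sign_vector r s) t = round_regret L sel X (sign_vector r s') t"
proof -
  have "hist X (\<lambda>i. sel (X i) (sign_vector r s)) t = hist X (\<lambda>i. sel (X i) (sign_vector r s')) t"
    unfolding X_def by (rule hist_axis_instance_sign_vector_cong[OF assms(1-3)]) (simp add: assms(4))
  moreover have "t \<in> {1..n} \<Longrightarrow> s (e t) = s' (e t)" by (simp add: assms(4))
  ultimately show ?thesis
    unfolding X_def round_regret_axis_instance[OF assms(1-3)] by auto
qed

lemma round_regret_axis_instance_flip:
  fixes n :: nat
  assumes "argmax_selector sel" "0 < a" "0 < r" "inj_on e {1..n}" "t \<in> {1..n}"
  defines "X \<equiv> axis_instance e n a"
  shows "2 * (a * r) \<le> round_regret L sel X (sign_vector r (s(e t := True))) t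
    + round_regret L sel X (sign_vector r (s(e t := False))) t"
proof -
  have "(s(e t := True)) (e i) = (s(e t := False)) (e i)" if "i \<in> {1..<t}" for i
    using inj_onD[OF assms(4), of i t] that assms(5) by auto
  then have "hist X (\<lambda>i. sel (X i) (sign_vector r (s(e t := True)))) t
      = hist X (\<lambda>i. sel (X i) (sign_vector r (s(e t := False)))) t"
    unfolding X_def by (rule hist_axis_instance_sign_vector_cong[OF assms(1-3)])
  with assms(2,3,5) show ?thesis
    unfolding X_def round_regret_axis_instance[OF assms(1-3)] by (simp add: axis_eq_axis)
qed

lemma expected_regret_axis_instance:
  fixes M :: "'w measure"
    and L :: "'w \<Rightarrow> nat \<Rightarrow> ((real^'n::finite) set \<times> (real^'n)) list \<Rightarrow> real^'n"
    and e :: "nat \<Rightarrow> 'n"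
  assumes "prob_space M" and L_measurable: "\<And>t h. (\<lambda>w. L w t h) \<in> borel_measurable M"
    and sel: "argmax_selector sel" and sel_measurable: "\<And>X. sel X \<in> borel_measurable borel"
    and "inj_on e {1..n}" "n \<le> T" "0 < a" "0 < r"
  shows "\<exists>s. real n * (a * r) \<le> (\<integral>w. regret (L w) sel T (sign_vector r s) (axis_instance e n a) \<partial>M)"
proof -
  interpret prob_space M by fact
  define X where "X = axis_instance e n a"
  define R where "R s t w = round_regret (L w) sel X (sign_vector r s) t" for s t w
  define f where "f s t = (\<integral>w. R s t w \<partial>M)" for s t
  have R_eq: "R s t w = (if t \<in> {1..n} \<and> sel (X t) (L w t (hist X (\<lambda>i. sel (X i) (sign_vector r s)) t))
        \<noteq> axis (e t) (if s (e t) then a else - a) then 2 * a * r else 0)" for s t w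
    unfolding R_def X_def by (rule round_regret_axis_instance[OF sel \<open>0 < a\<close> \<open>0 < r\<close>])
  have R_integrable: "integrable M (R s t)" for s t
    unfolding R_def using \<open>0 < a\<close> \<open>0 < r\<close>
    by (intro integrable_const_bound[where B = "2 * a * r"] measurable_round_regret
        L_measurable sel_measurable) (simp add: R_eq[unfolded R_def])
  have local: "f s t = f s' t"
    if "t \<in> {1..n}" "\<And>i. i \<in> {1..t} \<Longrightarrow> s (e i) = s' (e i)" for s s' t
  proof -
    have "R s t w = R s' t w" for w
      unfolding R_def X_def using that(2)
      by (rule round_regret_axis_instance_local[OF sel \<open>0 < a\<close> \<open>0 < r\<close>])
    then show ?thesis by (simp add: f_def)
  qed
  have flip: "2 * (a * r) \<le> f (s(e t := True)) t + f (s(e t := False)) t"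
    if "t \<in> {1..n}" for s t
  proof -
    have "2 * (a * r) \<le> R (s(e t := True)) t w + R (s(e t := False)) t w" for w
      unfolding R_def X_def
      by (rule round_regret_axis_instance_flip[OF sel \<open>0 < a\<close> \<open>0 < r\<close> \<open>inj_on e {1..n}\<close> that])
    then have "(\<integral>w. 2 * (a * r) \<partial>M) \<le> (\<integral>w. R (s(e t := True)) t w + R (s(e t := False)) t w \<partial>M)"
      by (intro integral_mono) (auto intro: R_integrable)
    then show ?thesis
      by (simp add: f_def R_integrable prob_space)
  qed
  obtain s where s: "\<forall>t\<in>{1..n}. a * r \<le> f s t"
    using exists_signs_ge_half_flip_sum[OF \<open>inj_on e {1..n}\<close> local flip] by blast
  have "(\<integral>w. regret (L w) sel T (sign_vector r s) X \<partial>M) = (\<integral>w. (\<Sum>t=1..T. R s t w) \<partial>M)"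
    by (simp add: regret_eq_sum_round_regret R_def)
  also have "\<dots> = (\<Sum>t=1..T. f s t)"
    unfolding f_def by (simp add: R_integrable)
  also have "\<dots> = (\<Sum>t=1..n. f s t)"
    using \<open>n \<le> T\<close> by (intro sum.mono_neutral_right) (auto simp: f_def R_eq)
  also have "\<dots> \<ge> (\<Sum>t=1..n. a * r)"
    using s by (intro sum_mono) auto
  finally show ?thesis
    unfolding X_def by auto
qed

theorem theorem3:
  fixes M :: "'w measure"
    and L :: "'w \<Rightarrow> nat \<Rightarrow> ((real^'n::finite) set \<times> (real^'n)) list \<Rightarrow> real^'n"
    and sel :: "(real^'n) set \<Rightarrow> real^'n \<Rightarrow> real^'n"
    and T :: nat and B :: real
  assumes "prob_space M"
    and "\<And>t h. (\<lambda>w. L w t h) \<in> borel_measurable M"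
    and "\<And>w t h. w \<in> space M \<Longrightarrow> L w t h \<in> Theta"
    and "argmax_selector sel"
    and "\<And>X. sel X \<in> borel_measurable borel"
    and "T \<ge> CARD('n)" and "B > 0"
  shows "\<exists>cs X. cs \<in> Theta \<and> (\<forall>t\<in>{1..T}. compact (X t) \<and> X t \<noteq> {})
           \<and> width T X = B
           \<and> (\<integral>w. regret (L w) sel T cs X \<partial>M) \<ge> B * real CARD('n) / 4"
proof -
  define n where "n = CARD('n)"
  have "1 \<le> n" by (simp add: n_def Suc_le_eq)
  obtain e :: "nat \<Rightarrow> 'n" where "bij_betw e {1..n} UNIV"
    using ex_bij_betw_nat_finite_1[of "UNIV :: 'n set"] by (auto simp: n_def)
  then have "inj_on e {1..n}" by (rule bij_betw_imp_inj_on)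
  define r where "r = 1 / sqrt (real n)"
  define a where "a = B * sqrt (real n) / 4"
  have "0 < r" "0 < a" using \<open>1 \<le> n\<close> \<open>B > 0\<close> by (auto simp: r_def a_def)
  have "a * r = B / 4" "4 * a / sqrt (real n) = B" using \<open>1 \<le> n\<close> by (auto simp: a_def r_def)
  have "n \<le> T" using assms(6) by (simp add: n_def)
  with expected_regret_axis_instance[OF assms(1), of L sel e n T a r] assms(2,4,5)
    \<open>inj_on e {1..n}\<close> \<open>0 < a\<close> \<open>0 < r\<close>
  obtain s where "real n * (a * r) \<le> (\<integral>w. regret (L w) sel T (sign_vector r s) (axis_instance e n a) \<partial>M)"
    by blast
  moreover have "width T (axis_instance e n a) = B"
    using width_axis_instance[OF \<open>1 \<le> n\<close> \<open>n \<le> T\<close>, where e = e and a = a] \<open>0 < a\<close>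
      \<open>4 * a / sqrt (real n) = B\<close>
    by (simp add: n_def)
  moreover have "sign_vector r s \<in> Theta"
    unfolding r_def n_def by (rule sign_vector_in_Theta)
  moreover have "B * real CARD('n) / 4 = real n * (a * r)"
    using \<open>a * r = B / 4\<close> by (simp add: n_def)
  ultimately show ?thesis
    using axis_instance_compact axis_instance_nonempty by metis
qed

end
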